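(* Let $s\ge1$. A general binary form $p\in H_{2s}(\mathbb{C}^2)$ can be written as $$p(x,y) = \Bigl(\sum_{k=0}^s t_kx^{s-k}y^k\Bigr)^2 + \Bigl(\sum_{k=1}^s t_{s+k}x^{s-k}y^k\Bigr)^2, \qquad t_k\in\mathbb{C},$$ in exactly $\binom{2s-1}{s}$ different ways. Note that the monomial $x^s$ does not appear in the second form.
   Context: $H_d(\mathbb{C}^n)$ denotes the complex vector space of homogeneous polynomials of degree $d$ in $n$ variables. "A general $p$ has property P" means P holds for all $p$ in a nonempty Zariski-open subset of $H_d(\mathbb{C}^n)$. Two representations are considered the same if they agree up to replacing each of the two squared forms by its negative. *)

theory Defs
  imports Complex_Main
begin

text \<open>Points of complex affine space of dimension N, as coefficient functions
  supported on indices 0..N-1.\<close>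
definition affspace :: "nat \<Rightarrow> (nat \<Rightarrow> complex) set" where
  "affspace N = {c. \<forall>j\<ge>N. c j = 0}"

inductive poly_fun :: "nat \<Rightarrow> ((nat \<Rightarrow> complex) \<Rightarrow> complex) \<Rightarrow> bool" for N where
  pf_const: "poly_fun N (\<lambda>c. a)"
| pf_var: "i < N \<Longrightarrow> poly_fun N (\<lambda>c. c i)"
| pf_add: "poly_fun N f \<Longrightarrow> poly_fun N g \<Longrightarrow> poly_fun N (\<lambda>c. f c + g c)"
| pf_mult: "poly_fun N f \<Longrightarrow> poly_fun N g \<Longrightarrow> poly_fun N (\<lambda>c. f c * g c)"

definition zariski_open :: "nat \<Rightarrow> (nat \<Rightarrow> complex) set \<Rightarrow> bool" where
  "zariski_open N U \<longleftrightarrow> (\<exists>S. (\<forall>f\<in>S. poly_fun N f) \<and>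
      U = {c \<in> affspace N. \<exists>f\<in>S. f c \<noteq> 0})"

text \<open>Binary form of degree d with coefficients c: sum of c j x^(d-j) y^j.
  H_d(C^2) is identified with affspace (d+1).\<close>
definition binform :: "nat \<Rightarrow> (nat \<Rightarrow> complex) \<Rightarrow> complex \<Rightarrow> complex \<Rightarrow> complex" where
  "binform d c x y = (\<Sum>j=0..d. c j * x ^ (d - j) * y ^ j)"

definition general_form :: "nat \<Rightarrow> ((nat \<Rightarrow> complex) \<Rightarrow> bool) \<Rightarrow> bool" where
  "general_form d P \<longleftrightarrow> (\<exists>U. zariski_open (d+1) U \<and> U \<noteq> {} \<and> (\<forall>p\<in>U. P p))"

text \<open>The two forms built from parameters t_0..t_{2s}: coefficients of x^(s-k) y^k.\<close>
definition formA :: "nat \<Rightarrow> (nat \<Rightarrow> complex) \<Rightarrow> (nat \<Rightarrow> complex)" where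
  "formA s t = (\<lambda>k. if k \<le> s then t k else 0)"

definition formB :: "nat \<Rightarrow> (nat \<Rightarrow> complex) \<Rightarrow> (nat \<Rightarrow> complex)" where
  "formB s t = (\<lambda>k. if 1 \<le> k \<and> k \<le> s then t (s + k) else 0)"

definition is_sos_rep :: "nat \<Rightarrow> (nat \<Rightarrow> complex) \<Rightarrow> (nat \<Rightarrow> complex) \<Rightarrow> bool" where
  "is_sos_rep s p t \<longleftrightarrow> (\<forall>x y. binform (2*s) p x y =
      (binform s (formA s t) x y)\<^sup>2 + (binform s (formB s t) x y)\<^sup>2)"

text \<open>Representations counted up to replacing each squared form by its negative.\<close>
definition sos_classes :: "nat \<Rightarrow> (nat \<Rightarrow> complex) \<Rightarrow>
    ((nat \<Rightarrow> complex) set \<times> (nat \<Rightarrow> complex) set) set" where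
  "sos_classes s p = (\<lambda>t. ({formA s t, (\<lambda>k. - formA s t k)}, {formB s t, (\<lambda>k. - formB s t k)}))
      ` {t. is_sos_rep s p t}"

end

theory Submission
  imports Defs "HOL-Computational_Algebra.Fundamental_Theorem_Algebra" "Subresultants.Subresultant_Gcd"
    "HOL-Computational_Algebra.Field_as_Ring"
begin

(* Dehomogenizing at x = 1 turns p into a polynomial P(y) and (A, B) into polynomials of
   degree <= s with B(0) = 0.  Since A^2 + B^2 = (A + iB)(A - iB), representations correspond
   bijectively to factorizations P = F G with deg F, deg G <= s and F(0) = G(0).  For generic p
   (p_0 p_{2s} Res(P, P') <> 0) the polynomial P has degree 2s and 2s distinct nonzero roots;
   a balanced factorization is then determined, up to a common sign, by the root set of F,
   which may be any s-element set of roots.  Changing the signs of A and B permutes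
   (F, G) into (-F, -G), (G, F) or (-G, -F), i.e. replaces the root set of F by its
   complement.  So the classes correspond to s-subsets of the roots modulo complement, or
   equivalently to s-subsets of the 2s - 1 roots different from a fixed root r0. *)


section \<open>Polynomial functions of the coefficients\<close>

lemma poly_fun_sum: "(\<And>i. i \<in> I \<Longrightarrow> poly_fun N (f i)) \<Longrightarrow> poly_fun N (\<lambda>c. \<Sum>i\<in>I. f i c)"
  by (induction I rule: infinite_finite_induct) (auto intro: poly_fun.intros)

lemma poly_fun_prod: "(\<And>i. i \<in> I \<Longrightarrow> poly_fun N (f i)) \<Longrightarrow> poly_fun N (\<lambda>c. \<Prod>i\<in>I. f i c)"
  by (induction I rule: infinite_finite_induct) (auto intro: poly_fun.intros)

lemma poly_fun_if: "poly_fun N f \<Longrightarrow> poly_fun N g \<Longrightarrow> poly_fun N (\<lambda>c. if b then f c else g c)"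
  by (cases b) auto

lemma poly_fun_det:
  assumes "\<And>i j. i < n \<Longrightarrow> j < n \<Longrightarrow> poly_fun N (\<lambda>c. M c $$ (i,j))"
    and "\<And>c. dim_row (M c) = n" "\<And>c. dim_col (M c) = n"
  shows "poly_fun N (\<lambda>c. det (M c))"
proof -
  have "(\<lambda>c. det (M c)) = (\<lambda>c. \<Sum>\<pi>\<in>{\<pi>. \<pi> permutes {0..<n}}.
          of_int (sign \<pi>) * (\<Prod>i\<in>{0..<n}. M c $$ (i, \<pi> i)))"
    by (simp add: det_def assms)
  moreover have "poly_fun N (\<lambda>c. M c $$ (i, \<pi> i))" if "\<pi> permutes {0..<n}" "i \<in> {0..<n}" for \<pi> i
    using that by (intro assms(1)) (auto simp: permutes_in_image)
  ultimately show ?thesis by (auto intro!: poly_fun_sum poly_fun_prod poly_fun.intros)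
qed

lemma poly_fun_resultant_sub:
  assumes "\<And>k. poly_fun N (\<lambda>c. coeff (Q c) k)" "\<And>k. poly_fun N (\<lambda>c. coeff (R c) k)"
  shows "poly_fun N (\<lambda>c. resultant_sub m n (Q c) (R c))"
  unfolding resultant_sub_def
proof (rule poly_fun_det[where n="m+n"])
  fix i j assume "i < m + n" "j < m + n"
  then show "poly_fun N (\<lambda>c. sylvester_mat_sub m n (Q c) (R c) $$ (i, j))"
    by (simp add: sylvester_mat_sub_def poly_fun_if assms poly_fun.pf_const)
qed auto


section \<open>Dehomogenization\<close>

definition dehom :: "nat \<Rightarrow> (nat \<Rightarrow> complex) \<Rightarrow> complex poly" where
  "dehom d c = (\<Sum>j\<le>d. monom (c j) j)"

lemma coeff_dehom: "coeff (dehom d c) k = (if k \<le> d then c k else 0)"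
  by (simp add: dehom_def coeff_sum)

lemma degree_dehom_le: "degree (dehom d c) \<le> d"
  unfolding dehom_def by (intro degree_sum_le) (auto intro: order.trans[OF degree_monom_le])

lemma degree_dehom: "c d \<noteq> 0 \<Longrightarrow> degree (dehom d c) = d"
  using le_degree[of "dehom d c" d] degree_dehom_le[of d c] by (simp add: coeff_dehom)

lemma dehom_coeff: "degree q \<le> d \<Longrightarrow> dehom d (coeff q) = q"
  unfolding dehom_def by (rule poly_as_sum_of_monoms')

lemma poly_fun_coeff_dehom: "poly_fun (Suc d) (\<lambda>c. coeff (dehom d c) k)"
  by (cases "k \<le> d") (simp_all add: coeff_dehom poly_fun.intros)

lemma poly_fun_coeff_pderiv_dehom: "poly_fun (Suc d) (\<lambda>c. coeff (pderiv (dehom d c)) k)"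
  unfolding coeff_pderiv by (intro poly_fun.pf_mult poly_fun.pf_const poly_fun_coeff_dehom)

lemma binform_at_1: "binform d c 1 y = poly (dehom d c) y"
  by (simp add: binform_def dehom_def poly_sum poly_monom atLeast0AtMost)

lemma binform_homogeneous:
  assumes x: "x \<noteq> 0"
  shows "binform d c x y = x^d * binform d c 1 (y/x)"
proof -
  have "binform d c x y = (\<Sum>j=0..d. x^d * (c j * 1 ^ (d - j) * (y/x) ^ j))"
    unfolding binform_def
  proof (rule sum.cong[OF refl])
    fix j assume "j \<in> {0..d}"
    then have "x^d = x^(d-j) * x^j" by (simp add: power_add[symmetric])
    then show "c j * x ^ (d - j) * y ^ j = x^d * (c j * 1 ^ (d - j) * (y/x) ^ j)"
      using x by (simp add: field_simps)
  qed
  then show ?thesis by (simp add: binform_def sum_distrib_left)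
qed

lemma continuous_vanishing_off_0:
  fixes g :: "complex \<Rightarrow> complex"
  assumes "isCont g 0" "\<And>x. x \<noteq> 0 \<Longrightarrow> g x = 0"
  shows "g 0 = 0"
proof -
  have "(g \<longlongrightarrow> g 0) (at 0)" using assms(1) by (simp add: isCont_def)
  moreover have "(g \<longlongrightarrow> 0) (at 0)"
    by (rule tendsto_eventually) (auto simp: eventually_at_filter assms(2))
  ultimately show ?thesis by (rule LIM_unique)
qed

lemma is_sos_rep_iff:
  "is_sos_rep s p t \<longleftrightarrow> dehom (2*s) p = (dehom s (formA s t))^2 + (dehom s (formB s t))^2"
  (is "_ \<longleftrightarrow> ?P = ?A^2 + ?B^2")
proof
  assume "is_sos_rep s p t"
  then have "poly ?P = poly (?A^2 + ?B^2)"
    by (auto simp: is_sos_rep_def binform_at_1[symmetric])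
  then show "?P = ?A^2 + ?B^2" by (simp add: poly_eq_poly_eq_iff)
next
  assume eq: "?P = ?A^2 + ?B^2"
  let ?g = "\<lambda>x y. binform (2*s) p x y - ((binform s (formA s t) x y)\<^sup>2 + (binform s (formB s t) x y)\<^sup>2)"
  have off_0: "?g x y = 0" if x: "x \<noteq> 0" for x y
  proof -
    have "x^(2*s) = (x^s)^2" by (simp add: power_mult[symmetric] mult.commute)
    then show ?thesis
      unfolding binform_homogeneous[OF x] binform_at_1 eq
      by (simp add: power_mult_distrib distrib_left)
  qed
  have "?g 0 y = 0" for y
  proof (rule continuous_vanishing_off_0[of "\<lambda>x. ?g x y"])
    show "isCont (\<lambda>x. ?g x y) 0" unfolding binform_def by (intro continuous_intros)
  qed (simp add: off_0)
  then have "?g x y = 0" for x y using off_0 by (cases "x = 0") auto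
  then show "is_sos_rep s p t" by (simp add: is_sos_rep_def)
qed


section \<open>The genericity condition\<close>

text \<open>p_0 p_{2s} Res(P, P'): it is nonzero iff P has degree 2s, a nonzero constant term and
  no repeated root.\<close>
definition generic_poly :: "nat \<Rightarrow> (nat \<Rightarrow> complex) \<Rightarrow> complex" where
  "generic_poly s c = c 0 * c (2*s) *
     resultant_sub (2*s) (2*s-1) (dehom (2*s) c) (pderiv (dehom (2*s) c))"

lemma poly_fun_generic_poly: "poly_fun (Suc (2*s)) (generic_poly s)"
  unfolding generic_poly_def
  by (intro poly_fun.pf_mult poly_fun.pf_var poly_fun_resultant_sub
        poly_fun_coeff_dehom poly_fun_coeff_pderiv_dehom) auto

lemma common_root_gcd:
  fixes f g :: "complex poly"
  assumes "poly f a = 0" "poly g a = 0" "f \<noteq> 0"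
  shows "degree (gcd f g) \<noteq> 0"
proof -
  have "[:-a,1:] dvd gcd f g" using assms by (simp add: poly_eq_0_iff_dvd)
  then have "degree [:-a,1:] \<le> degree (gcd f g)" using assms(3) by (intro dvd_imp_degree_le) auto
  then show ?thesis by simp
qed

lemma gcd_root:
  fixes f g :: "complex poly"
  assumes "degree (gcd f g) \<noteq> 0"
  shows "\<exists>a. poly f a = 0 \<and> poly g a = 0"
proof -
  have "\<not> constant (poly (gcd f g))" using assms by (simp add: constant_degree)
  then obtain a where "poly (gcd f g) a = 0" using fundamental_theorem_of_algebra by blast
  then have "[:-a,1:] dvd f" "[:-a,1:] dvd g"
    by (auto simp: poly_eq_0_iff_dvd intro: dvd_trans)
  then show ?thesis by (auto simp: poly_eq_0_iff_dvd)
qed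

lemma resultant_pderiv_nonzero_iff:
  fixes P :: "complex poly"
  assumes "degree P = n" "n \<ge> 1"
  shows "resultant_sub n (n-1) P (pderiv P) \<noteq> 0 \<longleftrightarrow> rsquarefree P"
proof -
  have "P \<noteq> 0" using assms by auto
  have "resultant_sub n (n-1) P (pderiv P) = resultant P (pderiv P)"
    using assms by (simp add: resultant_sub degree_pderiv)
  also have "\<dots> \<noteq> 0 \<longleftrightarrow> degree (gcd P (pderiv P)) = 0"
    by (simp add: resultant_0_gcd)
  also have "\<dots> \<longleftrightarrow> rsquarefree P"
    using \<open>P \<noteq> 0\<close> common_root_gcd[of P _ "pderiv P"] gcd_root[of P "pderiv P"]
    unfolding rsquarefree_roots by blast
  finally show ?thesis .
qed

lemma generic_poly_nonzero_imp:
  assumes s: "s \<ge> 1" and g: "generic_poly s c \<noteq> 0"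
  shows "c 0 \<noteq> 0" "degree (dehom (2*s) c) = 2*s" "rsquarefree (dehom (2*s) c)"
proof -
  show "c 0 \<noteq> 0" using g by (auto simp: generic_poly_def)
  show deg: "degree (dehom (2*s) c) = 2*s"
    using g by (intro degree_dehom) (auto simp: generic_poly_def)
  show "rsquarefree (dehom (2*s) c)"
    using g s resultant_pderiv_nonzero_iff[OF deg] by (auto simp: generic_poly_def)
qed

definition witness_form :: "nat \<Rightarrow> nat \<Rightarrow> complex" where
  "witness_form s = (\<lambda>j. if j = 0 then -1 else if j = 2*s then 1 else 0)"

lemma generic_poly_witness: assumes s: "s \<ge> 1" shows "generic_poly s (witness_form s) \<noteq> 0"
proof -
  let ?P = "dehom (2*s) (witness_form s)"
  have P: "?P = monom 1 (2*s) - 1"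
    using s by (auto simp: poly_eq_iff coeff_dehom witness_form_def)
  have deg: "degree ?P = 2*s" using s by (intro degree_dehom) (auto simp: witness_form_def)
  have "pderiv ?P = monom (of_nat (2*s)) (2*s - 1)"
    unfolding P by (simp add: pderiv_diff pderiv_monom)
  then have "poly (pderiv ?P) a = 0 \<Longrightarrow> poly ?P a \<noteq> 0" for a
    using s unfolding P by (auto simp: poly_monom power_0_left)
  then have "rsquarefree ?P" using deg s by (auto simp: rsquarefree_roots)
  then show ?thesis
    using s resultant_pderiv_nonzero_iff[OF deg] by (simp add: generic_poly_def witness_form_def)
qed


section \<open>Factorizations of squarefree polynomials\<close>

definition zeros :: "complex poly \<Rightarrow> complex set" where
  "zeros q = {z. poly q z = 0}"

lemma zeros_uminus [simp]: "zeros (- q) = zeros q"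
  by (simp add: zeros_def)

lemma zeros_smult [simp]: "a \<noteq> 0 \<Longrightarrow> zeros (Polynomial.smult a q) = zeros q"
  by (simp add: zeros_def)

lemma zeros_mult: "zeros (X * Y) = zeros X \<union> zeros Y"
  by (auto simp: zeros_def)

lemma finite_zeros: "q \<noteq> 0 \<Longrightarrow> finite (zeros q)"
  by (simp add: zeros_def poly_roots_finite)

lemma degree_linear_prod: "degree (\<Prod>z\<in>S. [:-z,1::complex:]) = card S"
  by (cases "finite S") (simp_all add: degree_prod_sum_eq)

lemma zeros_linear_prod: "finite S \<Longrightarrow> zeros (\<Prod>z\<in>S. [:-z,1::complex:]) = S"
  by (auto simp: zeros_def poly_prod)

lemma rsquarefree_eq_linear_prod:
  "rsquarefree X \<Longrightarrow> X = Polynomial.smult (lead_coeff X) (\<Prod>z\<in>zeros X. [:-z,1:])"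
  using complex_poly_decompose_rsquarefree[of X] by (simp add: zeros_def)

lemma card_zeros_rsquarefree: "rsquarefree X \<Longrightarrow> card (zeros X) = degree X"
  using rsquarefree_eq_linear_prod[of X] degree_linear_prod[of "zeros X"]
  by (metis degree_smult_eq leading_coeff_0_iff rsquarefree_def)

lemma rsquarefree_factor:
  assumes "X * Y = P" "rsquarefree P"
  shows "rsquarefree X"
proof -
  have "P \<noteq> 0" using assms(2) by (simp add: rsquarefree_def)
  then have "X \<noteq> 0" "order a P = order a X + order a Y" for a
    using assms(1) by (auto simp: order_mult)
  then show ?thesis using assms(2) by (auto simp: rsquarefree_def)
qed

lemma rsquarefree_factors_disjoint:
  assumes "X * Y = P" "rsquarefree P"
  shows "zeros X \<inter> zeros Y = {}"
proof -
  have "P \<noteq> 0" using assms(2) by (simp add: rsquarefree_def)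
  then have nz: "X \<noteq> 0" "Y \<noteq> 0" and ord: "order z P = order z X + order z Y" for z
    using assms(1) by (auto simp: order_mult)
  show ?thesis
  proof (rule ccontr)
    assume "zeros X \<inter> zeros Y \<noteq> {}"
    then obtain z where "poly X z = 0" "poly Y z = 0" by (auto simp: zeros_def)
    then have "order z P \<ge> 2" using nz ord[of z] by (auto simp: order_root)
    moreover have "order z P = 0 \<or> order z P = 1" using assms(2) by (simp add: rsquarefree_def)
    ultimately show False by linarith
  qed
qed

lemma rsquarefree_same_zeros:
  assumes "rsquarefree U" "rsquarefree V" "zeros U = zeros V"
  shows "U = Polynomial.smult (lead_coeff U / lead_coeff V) V"
proof -
  let ?Q = "\<Prod>z\<in>zeros U. [:-z,1:]"
  define c where "c = lead_coeff V"
  have "c \<noteq> 0" using assms(2) by (simp add: c_def rsquarefree_def)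
  moreover have "V = Polynomial.smult c ?Q"
    using rsquarefree_eq_linear_prod[OF assms(2)] assms(3) by (simp add: c_def)
  ultimately have "Polynomial.smult (lead_coeff U / c) V = Polynomial.smult (lead_coeff U) ?Q"
    by simp
  then show ?thesis using rsquarefree_eq_linear_prod[OF assms(1)] by (simp add: c_def)
qed

lemma smult_eq_self:
  assumes "Polynomial.smult k (P::complex poly) = P" "P \<noteq> 0"
  shows "k = 1"
proof -
  have "k * lead_coeff P = lead_coeff P" using arg_cong[OF assms(1), of "\<lambda>q. coeff q (degree P)"] by simp
  then show ?thesis using assms(2) by simp
qed

lemma balanced_factorization_unique:
  fixes X Y X' Y' P :: "complex poly"
  assumes XY: "X * Y = P" and XY': "X' * Y' = P" and sq: "rsquarefree P" and P0: "poly P 0 \<noteq> 0"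
    and ZX: "zeros X = zeros X'" and ZY: "zeros Y = zeros Y'"
    and bal: "poly X 0 = poly Y 0" and bal': "poly X' 0 = poly Y' 0"
  shows "(X = X' \<and> Y = Y') \<or> (X = -X' \<and> Y = -Y')"
proof -
  have "Y * X = P" "Y' * X' = P" using XY XY' by (simp_all add: mult.commute)
  then have sq_factors: "rsquarefree X" "rsquarefree Y" "rsquarefree X'" "rsquarefree Y'"
    using rsquarefree_factor XY XY' sq by blast+
  define a where "a = lead_coeff X / lead_coeff X'"
  define b where "b = lead_coeff Y / lead_coeff Y'"
  have Xa: "X = Polynomial.smult a X'" and Yb: "Y = Polynomial.smult b Y'"
    unfolding a_def b_def using sq_factors ZX ZY by (auto intro: rsquarefree_same_zeros)
  have "Polynomial.smult (a*b) P = P" using XY XY' Xa Yb by (simp add: mult.commute)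
  then have ab: "a * b = 1" using sq by (intro smult_eq_self) (auto simp: rsquarefree_def)
  have "poly X' 0 \<noteq> 0" using P0 XY' by auto
  then have "a = b" using bal bal' Xa Yb by simp
  then have "a^2 = 1" using ab by (simp add: power2_eq_square)
  then have "a = 1 \<or> a = -1" by (simp add: power2_eq_1_iff)
  then show ?thesis using Xa Yb \<open>a = b\<close> by auto
qed

lemma balanced_factorization_exists:
  fixes P :: "complex poly"
  assumes sq: "rsquarefree P" and P0: "poly P 0 \<noteq> 0" and S: "S \<subseteq> zeros P"
  shows "\<exists>F G. F * G = P \<and> poly F 0 = poly G 0 \<and> zeros F = S \<and>
           degree F = card S \<and> degree G = card (zeros P - S)"
proof -
  have finP: "finite (zeros P)" using sq by (simp add: finite_zeros rsquarefree_def)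
  have finS: "finite S" using S finP finite_subset by blast
  define F0 where "F0 = (\<Prod>z\<in>S. [:-z,1::complex:])"
  define G0 where "G0 = (\<Prod>z\<in>zeros P - S. [:-z,1::complex:])"
  define L where "L = lead_coeff P"
  have L0: "L \<noteq> 0" using sq by (simp add: L_def rsquarefree_def)
  have "(\<Prod>z\<in>zeros P. [:-z,1::complex:]) = G0 * F0"
    unfolding F0_def G0_def by (rule prod.subset_diff[OF S finP])
  then have P_eq: "P = Polynomial.smult L (F0 * G0)"
    using rsquarefree_eq_linear_prod[OF sq] by (simp add: L_def mult.commute)
  have F0_0: "poly F0 0 \<noteq> 0" and G0_0: "poly G0 0 \<noteq> 0"
    using P0 P_eq by auto
  define lam where "lam = csqrt (L * poly G0 0 / poly F0 0)"
  have lam2: "lam * lam = L * poly G0 0 / poly F0 0"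
    using power2_csqrt[of "L * poly G0 0 / poly F0 0"] by (simp add: lam_def power2_eq_square)
  then have lam0: "lam \<noteq> 0" using L0 F0_0 G0_0 by auto
  define F where "F = Polynomial.smult lam F0"
  define G where "G = Polynomial.smult (L / lam) G0"
  have "F * G = P" using lam0 by (simp add: F_def G_def P_eq)
  moreover have "poly F 0 = poly G 0"
    using lam2 lam0 F0_0 by (simp add: F_def G_def field_simps)
  moreover have "zeros F = S" using lam0 zeros_linear_prod[OF finS] by (simp add: F_def F0_def)
  moreover have "degree F = card S" "degree G = card (zeros P - S)"
    using lam0 L0 degree_linear_prod[of S] degree_linear_prod[of "zeros P - S"]
    by (simp_all add: F_def G_def F0_def G0_def)
  ultimately show ?thesis by blast
qed


lemma card_image_same_fibres:
  assumes "\<And>x y. x \<in> T \<Longrightarrow> y \<in> T \<Longrightarrow> f x = f y \<longleftrightarrow> g x = g y"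
  shows "card (f ` T) = card (g ` T)"
proof -
  let ?H = "(\<lambda>x. (f x, g x)) ` T"
  have "inj_on fst ?H" "inj_on snd ?H" using assms by (auto simp: inj_on_def)
  then have "card (fst ` ?H) = card ?H" "card (snd ` ?H) = card ?H" by (simp_all add: card_image)
  moreover have "fst ` ?H = f ` T" "snd ` ?H = g ` T" by (auto simp: image_image)
  ultimately show ?thesis by simp
qed

lemma avoiding_choice_eq_iff:
  assumes "X \<subseteq> R" "Y \<subseteq> R" "r \<in> R"
  shows "(if r \<in> X then R - X else X) = (if r \<in> Y then R - Y else Y) \<longleftrightarrow> (X = Y \<or> X = R - Y)"
  using assms by (cases "r \<in> X"; cases "r \<in> Y") auto

lemma pair_neg_eq_iff:
  "{f, \<lambda>k. - f k} = {g, \<lambda>k. - g k} \<longleftrightarrow> f = g \<or> f = (\<lambda>k. - (g::nat \<Rightarrow> complex) k)"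
proof
  assume "{f, \<lambda>k. - f k} = {g, \<lambda>k. - g k}"
  then have "f \<in> {g, \<lambda>k. - g k}" by (metis insertI1)
  then show "f = g \<or> f = (\<lambda>k. - g k)" by blast
qed auto


section \<open>Counting the representations of one generic form\<close>

locale generic_binform =
  fixes s :: nat and p :: "nat \<Rightarrow> complex"
  assumes s_pos: "s \<ge> 1" and p_0: "p 0 \<noteq> 0" and degree_P: "degree (dehom (2*s) p) = 2*s"
    and rsquarefree_P: "rsquarefree (dehom (2*s) p)"
begin

definition P :: "complex poly" where "P = dehom (2*s) p"
definition A :: "(nat \<Rightarrow> complex) \<Rightarrow> complex poly" where "A t = dehom s (formA s t)"
definition B :: "(nat \<Rightarrow> complex) \<Rightarrow> complex poly" where "B t = dehom s (formB s t)"
definition F :: "(nat \<Rightarrow> complex) \<Rightarrow> complex poly" where "F t = A t + Polynomial.smult \<i> (B t)"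
definition G :: "(nat \<Rightarrow> complex) \<Rightarrow> complex poly" where "G t = A t - Polynomial.smult \<i> (B t)"
definition reps :: "(nat \<Rightarrow> complex) set" where "reps = {t. is_sos_rep s p t}"
definition cls :: "(nat \<Rightarrow> complex) \<Rightarrow> (nat \<Rightarrow> complex) set \<times> (nat \<Rightarrow> complex) set" where
  "cls t = ({formA s t, \<lambda>k. - formA s t k}, {formB s t, \<lambda>k. - formB s t k})"

lemma P_0: "poly P 0 \<noteq> 0"
  using p_0 by (simp add: P_def poly_0_coeff_0 coeff_dehom)

lemma P_nonzero: "P \<noteq> 0"
  using rsquarefree_P by (simp add: P_def rsquarefree_def)

lemma card_zeros_P: "card (zeros P) = 2*s"
  using card_zeros_rsquarefree rsquarefree_P degree_P by (simp add: P_def)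

lemma finite_zeros_P: "finite (zeros P)"
  using P_nonzero by (rule finite_zeros)

text \<open>A fixed root; the complement-choice below keeps the half avoiding it.\<close>
definition r0 :: complex where "r0 = (SOME r. r \<in> zeros P)"

lemma r0_root: "r0 \<in> zeros P"
proof -
  have "zeros P \<noteq> {}" using card_zeros_P s_pos by auto
  then show ?thesis unfolding r0_def by (auto intro: someI)
qed

lemma coeff_A: "coeff (A t) = formA s t"
  by (rule ext) (simp add: A_def coeff_dehom formA_def)

lemma coeff_B: "coeff (B t) = formB s t"
  by (rule ext) (simp add: B_def coeff_dehom formB_def)

lemma F_G_balanced: "poly (F t) 0 = poly (G t) 0"
  by (simp add: F_def G_def poly_0_coeff_0 coeff_B formB_def)

lemma degree_F: "degree (F t) \<le> s" and degree_G: "degree (G t) \<le> s"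
  unfolding F_def G_def A_def B_def
  by (intro degree_add_le degree_diff_le degree_dehom_le order.trans[OF degree_smult_le])+

lemma A_eq: "A t = Polynomial.smult (1/2) (F t + G t)"
  by (rule poly_eqI) (simp only: F_def G_def coeff_add coeff_diff coeff_smult, simp add: field_simps)

lemma B_eq: "B t = Polynomial.smult (-\<i>/2) (F t - G t)"
  by (rule poly_eqI) (simp only: F_def G_def coeff_add coeff_diff coeff_smult, simp add: field_simps)

text \<open>A^2 + B^2 = (A + iB)(A - iB): representations are factorizations P = F G.\<close>
lemma reps_iff: "t \<in> reps \<longleftrightarrow> F t * G t = P"
proof -
  have "F t * G t = (A t)^2 + (B t)^2"
    by (simp add: F_def G_def algebra_simps power2_eq_square)
  then show ?thesis by (auto simp: reps_def is_sos_rep_iff P_def A_def B_def)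
qed

lemma rep_zeros:
  assumes "t \<in> reps"
  shows "zeros (G t) = zeros P - zeros (F t)" "card (zeros (F t)) = s" "zeros (F t) \<subseteq> zeros P"
proof -
  have FG: "F t * G t = P" and GF: "G t * F t = P" using assms reps_iff by (auto simp: mult.commute)
  show "zeros (G t) = zeros P - zeros (F t)" "zeros (F t) \<subseteq> zeros P"
    using rsquarefree_factors_disjoint[OF FG] FG[symmetric] rsquarefree_P
    by (auto simp: zeros_mult P_def)
  have "F t \<noteq> 0" "G t \<noteq> 0" using FG P_nonzero by auto
  then have "degree (F t) + degree (G t) = 2*s" using FG degree_P degree_mult_eq P_def by metis
  then have "degree (F t) = s" using degree_F[of t] degree_G[of t] by linarith
  then show "card (zeros (F t)) = s"
    using card_zeros_rsquarefree rsquarefree_factor[OF FG] rsquarefree_P by (simp add: P_def)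
qed

lemma rep_of_factorization:
  assumes "degree X \<le> s" "degree Y \<le> s" "poly X 0 = poly Y 0"
  shows "\<exists>t. F t = X \<and> G t = Y"
proof -
  define AX where "AX = Polynomial.smult (1/2) (X + Y)"
  define BX where "BX = Polynomial.smult (-\<i>/2) (X - Y)"
  have deg_AX: "degree AX \<le> s" unfolding AX_def
    by (intro order.trans[OF degree_smult_le] degree_add_le assms(1,2))
  have deg_BX: "degree BX \<le> s" unfolding BX_def
    by (intro order.trans[OF degree_smult_le] degree_diff_le assms(1,2))
  have BX_0: "coeff BX 0 = 0" using assms(3) by (simp add: BX_def poly_0_coeff_0[symmetric])
  define t where "t = (\<lambda>k. if k \<le> s then coeff AX k else coeff BX (k - s))"
  have "formA s t = coeff AX"
    using deg_AX by (auto simp: fun_eq_iff formA_def t_def coeff_eq_0)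
  then have At: "A t = AX" using deg_AX by (simp add: A_def dehom_coeff)
  have "formB s t k = coeff BX k" for k
    using deg_BX BX_0 by (cases "k = 0"; cases "k \<le> s") (auto simp: formB_def t_def coeff_eq_0)
  then have "formB s t = coeff BX" by blast
  then have Bt: "B t = BX" using deg_BX by (simp add: B_def dehom_coeff)
  have "F t = X"
    by (rule poly_eqI) (simp only: F_def At Bt AX_def BX_def coeff_add coeff_diff coeff_smult,
        simp add: field_simps)
  moreover have "G t = Y"
    by (rule poly_eqI) (simp only: G_def At Bt AX_def BX_def coeff_add coeff_diff coeff_smult,
        simp add: field_simps)
  ultimately show ?thesis by blast
qed

text \<open>Sign changes of A and B act on (F, G) as identity, common negation, swap, or swap
  with negation.\<close>
definition equiv_rep :: "(nat \<Rightarrow> complex) \<Rightarrow> (nat \<Rightarrow> complex) \<Rightarrow> bool" where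
  "equiv_rep t t' \<longleftrightarrow> (F t = F t' \<and> G t = G t') \<or> (F t = - F t' \<and> G t = - G t')
     \<or> (F t = G t' \<and> G t = F t') \<or> (F t = - G t' \<and> G t = - F t')"

lemma formA_eq_iff: "formA s t = formA s t' \<longleftrightarrow> A t = A t'"
  and formB_eq_iff: "formB s t = formB s t' \<longleftrightarrow> B t = B t'"
  by (simp_all add: poly_eq_iff fun_eq_iff coeff_A coeff_B)

lemma formA_eq_neg_iff: "formA s t = (\<lambda>k. - formA s t' k) \<longleftrightarrow> A t = - A t'"
  and formB_eq_neg_iff: "formB s t = (\<lambda>k. - formB s t' k) \<longleftrightarrow> B t = - B t'"
  by (simp_all add: poly_eq_iff fun_eq_iff coeff_A coeff_B)

lemma cls_eq_iff_signs:
  "cls t = cls t' \<longleftrightarrow> (A t = A t' \<or> A t = - A t') \<and> (B t = B t' \<or> B t = - B t')"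
  unfolding cls_def prod.inject pair_neg_eq_iff
    formA_eq_iff formB_eq_iff formA_eq_neg_iff formB_eq_neg_iff ..

lemma cls_eq_iff_equiv_rep: "cls t = cls t' \<longleftrightarrow> equiv_rep t t'"
proof
  assume "cls t = cls t'"
  then consider "A t = A t'" "B t = B t'" | "A t = A t'" "B t = - B t'"
    | "A t = - A t'" "B t = B t'" | "A t = - A t'" "B t = - B t'"
    unfolding cls_eq_iff_signs by blast
  then show "equiv_rep t t'"
    by cases (simp_all add: equiv_rep_def F_def G_def)
next
  assume "equiv_rep t t'"
  then consider "F t = F t'" "G t = G t'" | "F t = - F t'" "G t = - G t'"
    | "F t = G t'" "G t = F t'" | "F t = - G t'" "G t = - F t'"
    unfolding equiv_rep_def by blast
  then have "(A t = A t' \<or> A t = - A t') \<and> (B t = B t' \<or> B t = - B t')"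
  proof cases
    case 1 then show ?thesis by (simp add: A_eq[of t] A_eq[of t'] B_eq[of t] B_eq[of t'])
  next
    case 2
    then have "A t = - A t'" "B t = - B t'"
      unfolding A_eq[of t] A_eq[of t'] B_eq[of t] B_eq[of t']
      by (simp_all add: smult_add_right smult_diff_right)
    then show ?thesis by simp
  next
    case 3
    then have "A t = A t'" "B t = - B t'"
      unfolding A_eq[of t] A_eq[of t'] B_eq[of t] B_eq[of t']
      by (simp_all add: add.commute smult_diff_right)
    then show ?thesis by simp
  next
    case 4
    then have "A t = - A t'" "B t = B t'"
      unfolding A_eq[of t] A_eq[of t'] B_eq[of t] B_eq[of t']
      by (simp_all add: smult_add_right smult_diff_right)
    then show ?thesis by simp
  qed
  then show "cls t = cls t'" by (simp add: cls_eq_iff_signs)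
qed

lemma equiv_rep_iff_zeros:
  assumes t: "t \<in> reps" and t': "t' \<in> reps"
  shows "equiv_rep t t' \<longleftrightarrow> zeros (F t) = zeros (F t') \<or> zeros (F t) = zeros P - zeros (F t')"
proof
  assume "equiv_rep t t'"
  then consider "F t = F t'" | "F t = - F t'" | "F t = G t'" | "F t = - G t'"
    unfolding equiv_rep_def by blast
  then show "zeros (F t) = zeros (F t') \<or> zeros (F t) = zeros P - zeros (F t')"
    by cases (simp_all add: rep_zeros(1)[OF t'])
next
  have FG: "F t * G t = P" "F t' * G t' = P" "G t' * F t' = P"
    using t t' by (auto simp: reps_iff mult.commute)
  have sq: "rsquarefree P" using rsquarefree_P by (simp add: P_def)
  assume "zeros (F t) = zeros (F t') \<or> zeros (F t) = zeros P - zeros (F t')"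
  then show "equiv_rep t t'"
  proof
    assume e: "zeros (F t) = zeros (F t')"
    then have "zeros (G t) = zeros (G t')" using rep_zeros(1)[OF t] rep_zeros(1)[OF t'] by simp
    then have "(F t = F t' \<and> G t = G t') \<or> (F t = - F t' \<and> G t = - G t')"
      using balanced_factorization_unique[OF FG(1,2) sq P_0 e] F_G_balanced by blast
    then show ?thesis unfolding equiv_rep_def by blast
  next
    assume e: "zeros (F t) = zeros P - zeros (F t')"
    then have e1: "zeros (F t) = zeros (G t')" using rep_zeros(1)[OF t'] by simp
    have "zeros (G t) = zeros (F t')"
      using e rep_zeros[OF t] rep_zeros(3)[OF t'] by auto
    then have "(F t = G t' \<and> G t = F t') \<or> (F t = - G t' \<and> G t = - F t')"
      using balanced_factorization_unique[OF FG(1,3) sq P_0 e1] F_G_balanced[of t]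
        F_G_balanced[of t', symmetric] by blast
    then show ?thesis unfolding equiv_rep_def by blast
  qed
qed

definition half :: "(nat \<Rightarrow> complex) \<Rightarrow> complex set" where
  "half t = (if r0 \<in> zeros (F t) then zeros P - zeros (F t) else zeros (F t))"

lemma half_eq_iff_equiv_rep:
  assumes "t \<in> reps" "t' \<in> reps"
  shows "half t = half t' \<longleftrightarrow> equiv_rep t t'"
  unfolding half_def equiv_rep_iff_zeros[OF assms]
  by (rule avoiding_choice_eq_iff[OF rep_zeros(3)[OF assms(1)] rep_zeros(3)[OF assms(2)] r0_root])

lemma half_image: "half ` reps = {S. S \<subseteq> zeros P - {r0} \<and> card S = s}"
proof (intro equalityI subsetI)
  fix S assume "S \<in> half ` reps"
  then obtain t where t: "t \<in> reps" and S: "S = half t" by blast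
  have "card (zeros P - zeros (F t)) = card (zeros P) - card (zeros (F t))"
    using rep_zeros(3)[OF t] finite_zeros_P by (meson card_Diff_subset finite_subset)
  then have "card (zeros P - zeros (F t)) = s" using rep_zeros(2)[OF t] card_zeros_P by simp
  then show "S \<in> {S. S \<subseteq> zeros P - {r0} \<and> card S = s}"
    using rep_zeros[OF t] S by (auto simp: half_def)
next
  fix S assume "S \<in> {S. S \<subseteq> zeros P - {r0} \<and> card S = s}"
  then have S: "S \<subseteq> zeros P" "r0 \<notin> S" "card S = s" by auto
  obtain X Y where XY: "X * Y = P" "poly X 0 = poly Y 0" "zeros X = S"
      "degree X = card S" "degree Y = card (zeros P - S)"
    using balanced_factorization_exists[OF rsquarefree_P[folded P_def] P_0 S(1)] by blast
  have "card (zeros P - S) = s"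
    using S finite_subset[OF S(1) finite_zeros_P] card_zeros_P by (simp add: card_Diff_subset)
  then have "degree X \<le> s" "degree Y \<le> s" using XY S(3) by simp_all
  then obtain t where "F t = X" "G t = Y" using rep_of_factorization XY(2) by blast
  then have "t \<in> reps" "half t = S" using XY S by (auto simp: reps_iff half_def)
  then show "S \<in> half ` reps" by blast
qed

theorem card_sos_classes: "card (sos_classes s p) = (2*s - 1) choose s"
proof -
  have "card (sos_classes s p) = card (cls ` reps)"
    by (simp add: sos_classes_def cls_def reps_def)
  also have "\<dots> = card (half ` reps)"
    by (rule card_image_same_fibres) (simp add: cls_eq_iff_equiv_rep half_eq_iff_equiv_rep)
  also have "\<dots> = card (zeros P - {r0}) choose s"
    unfolding half_image by (rule n_subsets) (simp add: finite_zeros_P)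
  also have "card (zeros P - {r0}) = 2*s - 1"
    using r0_root finite_zeros_P card_zeros_P by simp
  finally show ?thesis .
qed

end


theorem theorem5p1:
  fixes s :: nat
  assumes "s \<ge> 1"
  shows "general_form (2*s) (\<lambda>p. card (sos_classes s p) = (2*s - 1) choose s)"
proof -
  define U where "U = {c \<in> affspace (2*s+1). \<exists>f\<in>{generic_poly s}. f c \<noteq> 0}"
  have "zariski_open (2*s+1) U"
    unfolding zariski_open_def U_def using poly_fun_generic_poly[of s]
    by (intro exI[of _ "{generic_poly s}"]) simp
  moreover have "witness_form s \<in> U"
    using generic_poly_witness[OF assms] by (auto simp: U_def affspace_def witness_form_def)
  moreover have "card (sos_classes s p) = (2*s - 1) choose s" if "p \<in> U" for p
  proof -
    have "generic_poly s p \<noteq> 0" using that by (simp add: U_def)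
    then interpret generic_binform s p
      using generic_poly_nonzero_imp assms by unfold_locales auto
    show ?thesis by (rule card_sos_classes)
  qed
  ultimately show ?thesis unfolding general_form_def by blast
qed

end
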